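(* Let $\eta > 0$. There is $\alpha_0(\eta)>0$ such that the following holds for every sufficiently large integer $X$ and every $\alpha$ with $\exp(-(\log X)^{3/4 - \eta}) \le \alpha \le \alpha_0(\eta)$: there is a function $f : \{1,\dots,X\} \to [0,1]$ such that (1) $\mathbb{E}_{x \in \{1,\dots,X\}} f(x)= \alpha$; (2) the sum of $f(x) f(y)$ over all $x, y \in \{1,\dots,X\}$ with $x - y$ a perfect square is at most $\frac{1}{100} \alpha^2 X^{3/2}$; (3) the length $X'$ of the longest arithmetic subprogression of $\{1,\dots,X\}$ on which the average of $f$ is at least $2\alpha$ satisfies $X' < X \exp (-(\log (1/\alpha))^{1/3})$. *)

theory Defs
  imports Complex_Main
begin

definition is_subprog :: "nat \<Rightarrow> nat \<Rightarrow> nat \<Rightarrow> nat \<Rightarrow> bool" where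
  "is_subprog X a d L \<longleftrightarrow> 1 \<le> a \<and> 1 \<le> d \<and> 1 \<le> L \<and> a + d * (L - 1) \<le> X"

definition prog_avg :: "(nat \<Rightarrow> real) \<Rightarrow> nat \<Rightarrow> nat \<Rightarrow> nat \<Rightarrow> real" where
  "prog_avg f a d L = (\<Sum>j<L. f (a + d * j)) / real L"

definition square_diff :: "nat \<Rightarrow> nat \<Rightarrow> bool" where
  "square_diff x y \<longleftrightarrow> (\<exists>n::nat. n \<ge> 1 \<and> x = y + n ^ 2)"

end

theory Submission
  imports Defs "HOL-Number_Theory.Cong"
begin

(*
  With s = (ln (1 / alpha))^(1/3) and G = exp s, take ten primes in (N, 2 N^3] for N ~ 2 G
  (they exist because 4^m / (2 m) <= (2m choose m) <= (2 m)^pi(2 m)) and let M be their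
  product. Then M is coprime to every step below 2 G, and M <= G^30 up to a constant, so
  M < 1 / alpha. Pick for each of the primes p a number E_p that is a quadratic non-residue
  modulo p and divisible by the other nine primes; the sums of E_p over the 5-element sets of
  primes give a set A of 252 residues modulo M such that a = b + n^2 (mod M) with a, b in A
  forces M to divide n. The function f is a constant multiple of the indicator function of
  {x. x mod M in A}, scaled to have mean alpha. A square difference x - y inside its support
  is the square of a multiple of M, which bounds the number of such pairs. A progression with
  step below 2 G meets the support with density about |A| / M, too little for an average of
  2 alpha once it is longer than 5 M, and a progression with a larger step is shorter
  than X / G.
*)

section \<open>Primes between \<open>N\<close> and \<open>2 * N ^ 3\<close>\<close>

lemma card_prime_power_divisors:
  fixes p m K :: nat
  assumes "prime p" "m > 0" "multiplicity p m \<le> K"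
  shows "card {i\<in>{1..K}. p ^ i dvd m} = multiplicity p m"
proof -
  have "p ^ i dvd m \<longleftrightarrow> i \<le> multiplicity p m" for i
    using assms(1,2) power_dvd_iff_le_multiplicity[of m p i] prime_gt_1_nat[of p] by simp
  then have "{i\<in>{1..K}. p ^ i dvd m} = {i\<in>{1..K}. i \<le> multiplicity p m}"
    by simp
  also have "\<dots> = {1..multiplicity p m}"
    using assms(3) by auto
  finally show ?thesis by simp
qed

lemma multiplicity_lt_self:
  fixes p n :: nat
  assumes "prime p" "n > 0"
  shows "multiplicity p n < n"
proof -
  have "multiplicity p n < p ^ multiplicity p n"
    using less_exp power_mono[OF prime_ge_2_nat[OF assms(1)], of "multiplicity p n"]
    by (meson less_le_trans zero_le)
  also have "\<dots> \<le> n"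
    using assms(2) by (intro dvd_imp_le multiplicity_dvd)
  finally show ?thesis .
qed

lemma multiplicity_fact:
  fixes p n K :: nat
  assumes "prime p" "n \<le> K"
  shows "multiplicity p (fact n) = (\<Sum>i=1..K. n div p ^ i)"
  using assms(2)
proof (induction n)
  case 0
  then show ?case by simp
next
  case (Suc n)
  have "multiplicity p (Suc n) \<le> K"
    using multiplicity_lt_self[OF assms(1), of "Suc n"] Suc.prems by simp
  then have "multiplicity p (Suc n) = card {i\<in>{1..K}. p ^ i dvd Suc n}"
    using card_prime_power_divisors[OF assms(1), of "Suc n" K] by simp
  also have "\<dots> = (\<Sum>i=1..K. of_bool (p ^ i dvd Suc n))"
    by (simp add: Int_def)
  finally have "multiplicity p (fact (Suc n) :: nat) = (\<Sum>i=1..K. of_bool (p ^ i dvd Suc n)) + (\<Sum>i=1..K. n div p ^ i)"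
    using prime_elem_multiplicity_mult_distrib[of p "Suc n" "fact n"] assms(1) Suc by simp
  also have "\<dots> = (\<Sum>i=1..K. of_bool (p ^ i dvd Suc n) + n div p ^ i)"
    by (rule sum.distrib[symmetric])
  also have "\<dots> = (\<Sum>i=1..K. Suc n div p ^ i)"
    using prime_gt_0_nat[OF assms(1)] by (intro sum.cong) (simp_all add: div_Suc dvd_eq_mod_eq_0)
  finally show ?case .
qed

text \<open>The \<open>i\<close>-th summand is the carry out of digit \<open>i\<close> when \<open>m + m\<close> is computed in base \<open>p\<close>.\<close>

lemma multiplicity_central_binomial:
  fixes p m :: nat
  assumes "prime p"
  shows "multiplicity p ((2*m) choose m) = (\<Sum>i=1..2*m. 2 * (m mod p ^ i) div p ^ i)"
proof -
  have "fact (2*m) = fact m * fact m * ((2*m) choose m :: nat)"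
    using binomial_fact_lemma[of m "2*m"] by (simp add: mult_2)
  then have "multiplicity p (fact (2*m) :: nat)
      = 2 * multiplicity p (fact m :: nat) + multiplicity p ((2*m) choose m)"
    using assms by (simp add: prime_elem_multiplicity_mult_distrib)
  moreover have "multiplicity p (fact m :: nat) = (\<Sum>i=1..2*m. m div p ^ i)"
    using multiplicity_fact[OF assms] by simp
  moreover have "2*m div p ^ i = 2 * (m div p ^ i) + 2 * (m mod p ^ i) div p ^ i" for i
    using div_add1_eq[of m m "p ^ i"] by (simp add: mult_2)
  then have "multiplicity p (fact (2*m) :: nat)
      = 2 * (\<Sum>i=1..2*m. m div p ^ i) + (\<Sum>i=1..2*m. 2 * (m mod p ^ i) div p ^ i)"
    using multiplicity_fact[OF assms order_refl] by (simp add: sum.distrib sum_distrib_left)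
  ultimately show ?thesis
    by linarith
qed

lemma prime_power_central_binomial_le:
  fixes p m :: nat
  assumes "prime p" "m > 0"
  shows "p ^ multiplicity p ((2*m) choose m) \<le> 2*m"
proof (rule ccontr)
  define v where "v = multiplicity p ((2*m) choose m)"
  assume "\<not> p ^ multiplicity p ((2*m) choose m) \<le> 2*m"
  then have large: "2*m < p ^ v"
    by (simp add: v_def)
  have "v = (\<Sum>i=1..2*m. 2 * (m mod p ^ i) div p ^ i)"
    unfolding v_def by (rule multiplicity_central_binomial[OF assms(1)])
  also have "\<dots> \<le> (\<Sum>i=1..2*m. of_bool (p ^ i \<le> 2*m))"
  proof (intro sum_mono)
    fix i
    have "2 * (m mod p ^ i) < 2 * p ^ i"
      using prime_gt_0_nat[OF assms(1)] by simp
    then have "2 * (m mod p ^ i) div p ^ i < 2"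
      by (rule less_mult_imp_div_less)
    moreover have "2 * (m mod p ^ i) div p ^ i = 0" if "2*m < p ^ i"
      using that by simp
    ultimately show "2 * (m mod p ^ i) div p ^ i \<le> of_bool (p ^ i \<le> 2*m)"
      by (cases "p ^ i \<le> 2*m") auto
  qed
  also have "\<dots> = card {i\<in>{1..2*m}. p ^ i \<le> 2*m}"
    by (simp add: Int_def)
  also have "\<dots> \<le> card {1..<v}"
  proof (intro card_mono subsetI)
    fix i
    assume "i \<in> {i\<in>{1..2*m}. p ^ i \<le> 2*m}"
    then have "1 \<le> i" "p ^ i < p ^ v"
      using large by auto
    moreover have "i < v"
      using power_less_imp_less_exp[OF prime_gt_1_nat[OF assms(1)] \<open>p ^ i < p ^ v\<close>] .
    ultimately show "i \<in> {1..<v}"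
      by simp
  qed simp
  finally have "v = 0"
    by simp
  with large assms(2) show False
    by simp
qed

lemma central_binomial_le_pow_prime_count:
  fixes m :: nat
  assumes "m > 0"
  shows "(2*m) choose m \<le> (2*m) ^ card {p. prime p \<and> p \<le> 2*m}"
proof -
  define C where "C = (2*m) choose m"
  have "C > 0"
    by (simp add: C_def)
  have prime_power_le: "p ^ multiplicity p C \<le> 2*m" if "p \<in> prime_factors C" for p
    using prime_power_central_binomial_le[OF _ assms] that by (auto simp: C_def)
  have "prime_factors C \<subseteq> {p. prime p \<and> p \<le> 2*m}"
  proof
    fix p
    assume p: "p \<in> prime_factors C"
    then have "p ^ 1 \<le> p ^ multiplicity p C"
      using \<open>C > 0\<close> by (intro power_increasing) (auto simp: prime_factors_multiplicity dest: prime_gt_0_nat)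
    with p prime_power_le[OF p] show "p \<in> {p. prime p \<and> p \<le> 2*m}"
      by auto
  qed
  then have "card (prime_factors C) \<le> card {p. prime p \<and> p \<le> 2*m}"
    by (intro card_mono) auto
  have "C = (\<Prod>p\<in>prime_factors C. p ^ multiplicity p C)"
    using prime_factorization_nat[OF \<open>C > 0\<close>] .
  also have "\<dots> \<le> (\<Prod>p\<in>prime_factors C. 2*m)"
    using prime_power_le by (intro prod_mono) auto
  also have "\<dots> = (2*m) ^ card (prime_factors C)"
    by simp
  also have "\<dots> \<le> (2*m) ^ card {p. prime p \<and> p \<le> 2*m}"
    using assms \<open>card (prime_factors C) \<le> _\<close> by (intro power_increasing) auto
  finally show ?thesis
    by (simp add: C_def)
qed

lemma two_mul_cube_le_two_pow:
  fixes n :: nat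
  assumes "12 \<le> n"
  shows "2 * n ^ 3 \<le> 2 ^ n"
  using assms
proof (induction n rule: dec_induct)
  case (step n)
  have "2 * Suc n ^ 3 = 2 * (n ^ 3 + 3 * n ^ 2 + 3 * n + 1)"
    by (simp add: power3_eq_cube power2_eq_square algebra_simps)
  also have "\<dots> \<le> 2 * (2 * n ^ 3)"
  proof -
    have "12 * n ^ 2 \<le> n ^ 3" "1 \<le> n ^ 2" "n \<le> n ^ 2"
      using step(1) by (auto simp: power3_eq_cube power2_eq_square)
    then show ?thesis
      by arith
  qed
  also have "\<dots> \<le> 2 ^ Suc n"
    using step.IH by simp
  finally show ?case .
qed simp

lemma ten_primes_between:
  fixes N :: nat
  assumes "12 \<le> N"
  shows "10 \<le> card {p. prime p \<and> N < p \<and> p \<le> 2 * N ^ 3}"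
proof (rule ccontr)
  define m where "m = N ^ 3"
  have "m > 0"
    using assms by (simp add: m_def)
  assume "\<not> 10 \<le> card {p. prime p \<and> N < p \<and> p \<le> 2 * N ^ 3}"
  then have "card {p. prime p \<and> N < p \<and> p \<le> 2 * m} \<le> 9"
    by (simp add: m_def)
  moreover have "card {p. prime p \<and> p \<le> 2*m}
      \<le> card ({1..N} \<union> {p. prime p \<and> N < p \<and> p \<le> 2 * m})"
    by (intro card_mono) (auto dest: prime_gt_0_nat)
  moreover have "card ({1..N} \<union> {p. prime p \<and> N < p \<and> p \<le> 2 * m})
      \<le> N + card {p. prime p \<and> N < p \<and> p \<le> 2 * m}"
    using card_Un_le[of "{1..N}"] by simp
  ultimately have prime_count: "card {p. prime p \<and> p \<le> 2*m} \<le> N + 9"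
    by linarith
  have "real (4 ^ m) \<le> real (((2*m) choose m) * (2*m))"
    using central_binomial_lower_bound[OF \<open>m > 0\<close>] \<open>m > 0\<close> by (simp add: field_simps)
  then have "4 ^ m \<le> ((2*m) choose m) * (2*m)"
    by (simp only: of_nat_le_iff)
  also have "\<dots> \<le> (2*m) ^ (N + 9) * (2*m)"
  proof (intro mult_right_mono)
    have "(2*m) ^ card {p. prime p \<and> p \<le> 2*m} \<le> (2*m) ^ (N + 9)"
      using prime_count \<open>m > 0\<close> by (intro power_increasing) auto
    then show "(2*m) choose m \<le> (2*m) ^ (N + 9)"
      using central_binomial_le_pow_prime_count[OF \<open>m > 0\<close>] by linarith
  qed simp
  also have "\<dots> = (2*m) ^ Suc (N + 9)"
    by (simp only: power_Suc2)
  also have "\<dots> \<le> (2 ^ N) ^ Suc (N + 9)"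
    unfolding m_def using two_mul_cube_le_two_pow[OF assms] by (intro power_mono) auto
  finally have "(2::nat) ^ (2 * N ^ 3) \<le> 2 ^ (N * Suc (N + 9))"
    by (simp add: m_def power_mult)
  moreover have "N * Suc (N + 9) < 2 * N ^ 3"
  proof -
    have "12 * (N * N) \<le> N * N * N"
      using assms by simp
    moreover have "N \<le> N * N" "N * Suc (N + 9) = N * N + 10 * N"
      by (simp_all add: algebra_simps)
    ultimately show ?thesis
      using assms unfolding power3_eq_cube by arith
  qed
  ultimately show False
    by (simp add: power_le_imp_le_exp)
qed

section \<open>Residue sets without square differences\<close>

lemma exists_quadratic_nonresidue:
  fixes p :: nat
  assumes "prime p" "2 < p"
  shows "\<exists>r. \<forall>n. \<not> [n ^ 2 = r] (mod p)"
proof -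
  define sq where "sq n = n ^ 2 mod p" for n
  have "p > 0"
    using assms by simp
  have "sq 1 = sq (p - 1)"
  proof -
    have "(p - 1) ^ 2 + 2 * p = 1 + p * p"
      using \<open>p > 0\<close> by (cases p) (simp_all add: power2_eq_square algebra_simps)
    then show ?thesis
      unfolding sq_def by (metis mod_mult_self1 power_one)
  qed
  moreover have "1 \<noteq> p - 1" "1 \<in> {..<p}" "p - 1 \<in> {..<p}"
    using assms by auto
  ultimately have "\<not> inj_on sq {..<p}"
    unfolding inj_on_def by blast
  moreover have "sq ` {..<p} \<subseteq> {..<p}"
    using \<open>p > 0\<close> by (auto simp: sq_def)
  ultimately have "sq ` {..<p} \<noteq> {..<p}"
    using eq_card_imp_inj_on[of "{..<p}" sq] by auto
  with \<open>sq ` {..<p} \<subseteq> {..<p}\<close> obtain r where r: "r < p" "r \<notin> sq ` {..<p}"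
    by auto
  have "\<not> [n ^ 2 = r] (mod p)" for n
  proof
    assume "[n ^ 2 = r] (mod p)"
    then have "sq (n mod p) = r"
      using r(1) by (simp add: sq_def cong_def power_mod)
    with r(2) \<open>p > 0\<close> show False
      by auto
  qed
  then show ?thesis
    by blast
qed

lemma exists_nonresidue_vanishing_elsewhere:
  fixes P :: "nat set"
  assumes "finite P" "\<And>q. q \<in> P \<Longrightarrow> prime q" "p \<in> P" "2 < p"
  shows "\<exists>e. (\<forall>q\<in>P - {p}. [e = 0] (mod q)) \<and> (\<forall>n. \<not> [n ^ 2 = e] (mod p))"
proof -
  obtain r where r: "\<forall>n. \<not> [n ^ 2 = r] (mod p)"
    using exists_quadratic_nonresidue assms(2-4) by blast
  have "\<forall>q\<in>P. \<forall>q'\<in>P. q \<noteq> q' \<longrightarrow> coprime q q'"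
    using assms(2) by (auto intro: primes_coprime)
  then have "\<exists>e. \<forall>q\<in>P. [e = (if q = p then r else 0)] (mod q)"
    using chinese_remainder_nat[OF assms(1), of id "\<lambda>q. if q = p then r else 0"] by simp
  then obtain e where e: "\<forall>q\<in>P. [e = (if q = p then r else 0)] (mod q)"
    by blast
  have "\<not> [n ^ 2 = e] (mod p)" for n
    using e assms(3) r cong_trans by fastforce
  moreover have "[e = 0] (mod q)" if "q \<in> P - {p}" for q
    using e that by auto
  ultimately show ?thesis
    by blast
qed

lemma prod_primes_dvd_of_dvd_square:
  fixes P :: "nat set"
  assumes "finite P" "\<And>p. p \<in> P \<Longrightarrow> prime p" "\<Prod>P dvd n ^ 2"
  shows "\<Prod>P dvd n"
proof -
  have "[n = 0] (mod p)" if "p \<in> P" for p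
    using that assms(2,3) dvd_prodI[OF assms(1) that, of id]
    by (auto simp: cong_0_iff dest: prime_dvd_power dvd_trans)
  then have "[n = 0] (mod \<Prod>P)"
    using assms(2) by (intro coprime_cong_prod_nat) (auto intro: primes_coprime)
  then show ?thesis
    by (simp add: cong_0_iff)
qed

definition square_avoiding :: "nat \<Rightarrow> nat set \<Rightarrow> bool" where
  "square_avoiding M A \<longleftrightarrow> (\<forall>a\<in>A. \<forall>b\<in>A. \<forall>n. [a = b + n ^ 2] (mod M) \<longrightarrow> M dvd n)"

lemma subset_sum_cong_square_imp_subset:
  fixes P I J :: "nat set" and E :: "nat \<Rightarrow> nat"
  assumes "finite P"
    and vanish: "\<And>p q. p \<in> P \<Longrightarrow> q \<in> P - {p} \<Longrightarrow> [E p = 0] (mod q)"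
    and nonresidue: "\<And>p n. p \<in> P \<Longrightarrow> \<not> [n ^ 2 = E p] (mod p)"
    and "I \<subseteq> P" "J \<subseteq> P" "[(\<Sum>q\<in>J. E q) = (\<Sum>q\<in>I. E q) + n ^ 2] (mod \<Prod>P)"
  shows "J \<subseteq> I"
proof
  have sum_cong_zero: "[(\<Sum>q\<in>K. E q) = 0] (mod p)" if "K \<subseteq> P" "p \<in> P" "p \<notin> K" for K p
  proof -
    have "[E q = 0] (mod p)" if "q \<in> K" for q
      using vanish \<open>K \<subseteq> P\<close> \<open>p \<in> P\<close> \<open>p \<notin> K\<close> that by blast
    then have "[(\<Sum>q\<in>K. E q) = (\<Sum>q\<in>K. 0)] (mod p)"
      by (rule cong_sum)
    then show ?thesis
      by simp
  qed
  fix p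
  assume "p \<in> J"
  show "p \<in> I"
  proof (rule ccontr)
    assume "p \<notin> I"
    have "p \<in> P" "finite J"
      using \<open>p \<in> J\<close> assms(5) assms(1) finite_subset by auto
    have "[(\<Sum>q\<in>J. E q) = (\<Sum>q\<in>I. E q) + n ^ 2] (mod p)"
      using assms(6) cong_dvd_modulus_nat dvd_prodI[OF assms(1) \<open>p \<in> P\<close>, of id] by auto
    moreover have "[(\<Sum>q\<in>I. E q) = 0] (mod p)"
      using sum_cong_zero assms(4) \<open>p \<in> P\<close> \<open>p \<notin> I\<close> .
    moreover have "[(\<Sum>q\<in>J. E q) = E p] (mod p)"
    proof -
      have "[(\<Sum>q\<in>J - {p}. E q) = 0] (mod p)"
        using sum_cong_zero[of "J - {p}" p] assms(5) \<open>p \<in> P\<close> by blast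
      then show ?thesis
        using \<open>p \<in> J\<close> \<open>finite J\<close> cong_add_lcancel_0_nat[of "E p" _ p] by (simp add: sum.remove)
    qed
    ultimately have "[n ^ 2 = E p] (mod p)"
      by (metis add_0 cong_add_rcancel_nat cong_sym cong_trans)
    with nonresidue \<open>p \<in> P\<close> show False
      by blast
  qed
qed

lemma square_avoiding_subset_sums:
  fixes P :: "nat set" and k :: nat
  assumes "finite P" "\<And>p. p \<in> P \<Longrightarrow> prime p" "\<And>p. p \<in> P \<Longrightarrow> 2 < p"
  shows "\<exists>A. A \<subseteq> {..<\<Prod>P} \<and> card A = card P choose k \<and> square_avoiding (\<Prod>P) A"
proof -
  define M where "M = \<Prod>P"
  have "M > 0"
    using assms(1,2) by (simp add: M_def prime_gt_0_nat)
  have "\<forall>p\<in>P. \<exists>e. (\<forall>q\<in>P - {p}. [e = 0] (mod q)) \<and> (\<forall>n. \<not> [n ^ 2 = e] (mod p))"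
    using exists_nonresidue_vanishing_elsewhere[OF assms(1,2)] assms(3) by blast
  from bchoice[OF this] obtain E where
    E: "\<forall>p\<in>P. (\<forall>q\<in>P - {p}. [E p = 0] (mod q)) \<and> (\<forall>n. \<not> [n ^ 2 = E p] (mod p))"
    by blast
  define \<sigma> where "\<sigma> I = (\<Sum>p\<in>I. E p)" for I
  define F where "F = {I. I \<subseteq> P \<and> card I = k}"
  have eq: "I = J" if "I \<in> F" "J \<in> F" "[\<sigma> J = \<sigma> I + n ^ 2] (mod M)" for I J n
  proof -
    have "J \<subseteq> I"
      using subset_sum_cong_square_imp_subset[OF assms(1), of E I J n] E that
      by (auto simp: F_def \<sigma>_def M_def)
    then show ?thesis
      using that assms(1) card_subset_eq[of I J] finite_subset by (auto simp: F_def)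
  qed
  define A where "A = (\<lambda>I. \<sigma> I mod M) ` F"
  have "inj_on (\<lambda>I. \<sigma> I mod M) F"
    using eq[where n = 0] by (intro inj_onI) (simp add: cong_def)
  then have "card A = card P choose k"
    using n_subsets[OF assms(1)] by (simp add: A_def F_def card_image)
  moreover have "A \<subseteq> {..<M}"
    using \<open>M > 0\<close> by (auto simp: A_def)
  moreover have "M dvd n" if a: "a \<in> A" and b: "b \<in> A" and ab: "[a = b + n ^ 2] (mod M)" for a b n
  proof -
    obtain I J where IJ: "I \<in> F" "J \<in> F" "a = \<sigma> J mod M" "b = \<sigma> I mod M"
      using a b by (auto simp: A_def)
    with ab have "[\<sigma> J = \<sigma> I + n ^ 2] (mod M)"
      by (metis cong_add_rcancel_nat cong_mod_left cong_sym cong_trans)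
    with IJ have "a = b"
      using eq by blast
    with ab have "[b + n ^ 2 = b] (mod M)"
      by (simp add: cong_sym)
    then have "M dvd n ^ 2"
      by (simp add: cong_add_lcancel_0_nat cong_0_iff)
    then show ?thesis
      unfolding M_def using prod_primes_dvd_of_dvd_square assms(1,2) by blast
  qed
  ultimately show ?thesis
    by (auto simp: square_avoiding_def M_def)
qed

lemma exists_square_avoiding_modulus:
  fixes N :: nat
  assumes "12 \<le> N"
  obtains M A where "0 < M" "M \<le> (2 * N ^ 3) ^ 10" "\<And>d. 1 \<le> d \<Longrightarrow> d \<le> N \<Longrightarrow> coprime d M"
    "A \<subseteq> {..<M}" "card A = 252" "square_avoiding M A"
proof -
  obtain P where P: "P \<subseteq> {p. prime p \<and> N < p \<and> p \<le> 2 * N ^ 3}" "card P = 10" "finite P"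
    using obtain_subset_with_card_n[OF ten_primes_between[OF assms]] by blast
  then have prime: "\<And>p. p \<in> P \<Longrightarrow> prime p" and large: "\<And>p. p \<in> P \<Longrightarrow> N < p"
    and small: "\<And>p. p \<in> P \<Longrightarrow> p \<le> 2 * N ^ 3"
    by auto
  obtain A where "A \<subseteq> {..<\<Prod>P}" "card A = 10 choose 5" "square_avoiding (\<Prod>P) A"
    using square_avoiding_subset_sums[OF P(3) prime, of 5] large assms P(2) by force
  moreover have "0 < \<Prod>P"
    using prime P(3) by (simp add: prime_gt_0_nat)
  moreover have "\<Prod>P \<le> (2 * N ^ 3) ^ 10"
    using prod_mono[of P id "\<lambda>_. 2 * N ^ 3"] small P(2) by simp
  moreover have "coprime d (\<Prod>P)" if "1 \<le> d" "d \<le> N" for d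
  proof (rule prod_coprime_right)
    fix p
    assume "p \<in> P"
    then have "\<not> p dvd d"
      using large[of p] that by (auto dest: dvd_imp_le)
    then show "coprime d p"
      using prime_imp_coprime[OF prime[OF \<open>p \<in> P\<close>]] by (simp add: coprime_commute)
  qed
  moreover have "(10 choose 5) = (252::nat)"
    by (simp add: numeral_eq_Suc)
  ultimately show ?thesis
    using that by simp
qed

section \<open>Counting in residue classes\<close>

lemma card_residues_in_interval_ge:
  fixes M X :: nat and A :: "nat set"
  assumes "0 < M" "A \<subseteq> {..<M}"
  shows "card A * (X div M - 1) \<le> card {x\<in>{1..X}. x mod M \<in> A}"
proof -
  define g where "g = (\<lambda>(b, q). b + q * M)"
  have "finite A"
    using assms(2) finite_subset by blast
  have "inj_on g (A \<times> {1..<X div M})"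
  proof (rule inj_onI, clarify)
    fix b q b' q'
    assume "b \<in> A" "b' \<in> A" "g (b, q) = g (b', q')"
    then have "b < M" "b' < M" "b + q * M = b' + q' * M"
      using assms(2) by (auto simp: g_def)
    moreover have "b = (b + q * M) mod M" "b' = (b' + q' * M) mod M"
      "q = (b + q * M) div M" "q' = (b' + q' * M) div M"
      using \<open>b < M\<close> \<open>b' < M\<close> by simp_all
    ultimately show "b = b' \<and> q = q'"
      by metis
  qed
  moreover have "g ` (A \<times> {1..<X div M}) \<subseteq> {x\<in>{1..X}. x mod M \<in> A}"
  proof (rule image_subsetI)
    fix x
    assume "x \<in> A \<times> {1..<X div M}"
    then obtain b q where "x = (b, q)" "b \<in> A" "1 \<le> q" "q < X div M"
      by auto
    have "b < M"
      using assms(2) \<open>b \<in> A\<close> by auto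
    have "M + q * M \<le> X div M * M"
      using mult_le_mono1[of "Suc q" "X div M" M] \<open>q < X div M\<close> by simp
    moreover have "X div M * M \<le> X"
      by (rule div_times_less_eq_dividend)
    ultimately have "b + q * M \<le> X"
      using \<open>b < M\<close> by linarith
    moreover have "1 \<le> b + q * M"
      using assms(1) \<open>1 \<le> q\<close> by (simp add: Suc_le_eq)
    ultimately show "g x \<in> {x\<in>{1..X}. x mod M \<in> A}"
      using \<open>x = (b, q)\<close> \<open>b \<in> A\<close> \<open>b < M\<close> by (simp add: g_def)
  qed
  then have "card (g ` (A \<times> {1..<X div M})) \<le> card {x\<in>{1..X}. x mod M \<in> A}"
    by (intro card_mono) auto
  ultimately show ?thesis
    by (simp add: card_image card_cartesian_product)
qed

lemma card_progression_residues_le: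
  fixes M d a L :: nat and A :: "nat set"
  assumes "0 < M" "coprime d M" "A \<subseteq> {..<M}"
  shows "card {j\<in>{..<L}. (a + d * j) mod M \<in> A} \<le> card A * (L div M + 1)"
proof -
  define h where "h j = ((a + d * j) mod M, j div M)" for j
  have "finite A"
    using assms(3) finite_subset by blast
  have "inj_on h {j\<in>{..<L}. (a + d * j) mod M \<in> A}"
  proof (rule inj_onI)
    fix j j'
    assume "h j = h j'"
    then have "[a + d * j = a + d * j'] (mod M)" "j div M = j' div M"
      by (simp_all add: h_def cong_def)
    then have "[j = j'] (mod M)" "j div M = j' div M"
      using assms(2) by (simp_all add: cong_add_lcancel_nat cong_mult_lcancel_nat)
    then show "j = j'"
      by (metis cong_def div_mult_mod_eq)
  qed
  moreover have "h ` {j\<in>{..<L}. (a + d * j) mod M \<in> A} \<subseteq> A \<times> {..L div M}"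
    by (auto simp: h_def intro: div_le_mono)
  then have "card (h ` {j\<in>{..<L}. (a + d * j) mod M \<in> A}) \<le> card (A \<times> {..L div M})"
    using \<open>finite A\<close> by (intro card_mono) auto
  ultimately show ?thesis
    by (simp add: card_image card_cartesian_product)
qed

lemma card_square_diff_pairs_le:
  fixes M X :: nat and A :: "nat set"
  assumes "0 < M" "square_avoiding M A"
  shows "card {(x, y) \<in> {1..X} \<times> {1..X}. square_diff x y \<and> x mod M \<in> A \<and> y mod M \<in> A}
         \<le> card {x\<in>{1..X}. x mod M \<in> A} * nat \<lfloor>sqrt (real X) / real M\<rfloor>"
    (is "card ?T \<le> card ?S * ?K")
proof -
  define h where "h = (\<lambda>(x, y). (y, x - y :: nat))"
  define Q where "Q = (\<lambda>m. (M * m) ^ 2) ` {1..?K}"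
  have "inj_on h ?T"
    by (rule inj_onI) (auto simp: h_def square_diff_def)
  have "h ` ?T \<subseteq> ?S \<times> Q"
  proof (rule image_subsetI)
    fix z
    assume "z \<in> ?T"
    then obtain x y n where "z = (x, y)" "x \<le> X" "y \<in> ?S" "1 \<le> n" "x = y + n ^ 2"
      "x mod M \<in> A" "y mod M \<in> A"
      by (auto simp: square_diff_def)
    moreover have "[x mod M = y mod M + n ^ 2] (mod M)"
      using \<open>x = y + n ^ 2\<close> by (simp add: cong_def mod_add_left_eq)
    ultimately have "M dvd n"
      using assms(2) unfolding square_avoiding_def by blast
    then obtain m where m: "n = M * m"
      by blast
    with \<open>1 \<le> n\<close> have "1 \<le> m"
      by (cases m) auto
    have "(M * m) ^ 2 \<le> X"
      using \<open>x \<le> X\<close> \<open>x = y + n ^ 2\<close> m by simp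
    then have "real M * real m \<le> sqrt (real X)"
      by (simp add: real_le_rsqrt flip: of_nat_mult of_nat_power of_nat_le_iff)
    then have "m \<le> ?K"
      using assms(1) by (simp add: field_simps le_nat_floor)
    with \<open>1 \<le> m\<close> have "x - y \<in> Q"
      using \<open>x = y + n ^ 2\<close> m by (auto simp: Q_def)
    with \<open>z = (x, y)\<close> \<open>y \<in> ?S\<close> show "h z \<in> ?S \<times> Q"
      by (simp add: h_def)
  qed
  then have "card (h ` ?T) \<le> card (?S \<times> Q)"
    by (intro card_mono) (auto simp: Q_def)
  also have "\<dots> \<le> card ?S * ?K"
    using card_image_le[of "{1..?K}" "\<lambda>m. (M * m) ^ 2"] by (simp add: Q_def card_cartesian_product)
  finally show ?thesis
    using \<open>inj_on h ?T\<close> by (simp add: card_image)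
qed

section \<open>The weight function\<close>

lemma is_subprog_bounds:
  assumes "is_subprog X a d L"
  shows "L \<le> X" "d * (L - 1) < X"
proof -
  have "1 \<le> a" "1 \<le> d" "1 \<le> L" "a + d * (L - 1) \<le> X"
    using assms by (auto simp: is_subprog_def)
  moreover have "L - 1 \<le> d * (L - 1)"
    using \<open>1 \<le> d\<close> by simp
  ultimately show "L \<le> X" "d * (L - 1) < X"
    by linarith+
qed

text \<open>\<open>G\<close> is the scale \<open>exp ((ln (1 / \<alpha>)) powr (1/3))\<close>: steps below \<open>2 * G\<close> are coprime
  to \<open>M\<close>, and a progression of length at least \<open>X / G\<close> has no larger step.\<close>

locale sparse_residue_weight =
  fixes M X :: nat and A :: "nat set" and \<alpha> G :: real
  assumes modulus_pos: "0 < M"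
    and residues_less: "A \<subseteq> {..<M}"
    and residues_square_avoiding: "square_avoiding M A"
    and card_residues_ge: "200 \<le> card A"
    and coprime_short_steps: "\<And>d. 1 \<le> d \<Longrightarrow> real d < 2 * G \<Longrightarrow> coprime d M"
    and density_pos: "0 < \<alpha>"
    and density_modulus_le: "\<alpha> * M \<le> 1"
    and scale_ge_one: "1 \<le> G"
    and interval_large: "5 * M * G < X"
begin

definition pattern :: "nat set" where
  "pattern = {x\<in>{1..X}. x mod M \<in> A}"

definition weight :: "nat \<Rightarrow> real" where
  "weight x = (if x mod M \<in> A then \<alpha> * X / card pattern else 0)"

lemma modulus_interval_large: "5 * real M < real X"
proof -
  have "5 * real M \<le> 5 * M * G"
    using mult_left_mono[OF scale_ge_one, of "5 * real M"] by simp
  with interval_large show ?thesis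
    by linarith
qed

lemma card_pattern_ge: "real (card A) * (real X - 2 * M) \<le> real (card pattern) * M"
proof -
  have "card A * (X div M - 1) \<le> card pattern"
    unfolding pattern_def using card_residues_in_interval_ge[OF modulus_pos residues_less] .
  then have pattern_ge: "real (card A) * (real M * real (X div M - 1)) \<le> real (card pattern) * M"
    by (metis mult.assoc mult.commute mult_le_mono1 of_nat_le_iff of_nat_mult)
  have "real X - 2 * M \<le> real M * real (X div M - 1)"
  proof -
    have "X < M * (X div M) + M"
      using modulus_pos by (metis add_less_cancel_left div_mult_mod_eq mod_less_divisor mult.commute)
    moreover have "1 \<le> X div M"
    proof -
      have "real M < real X"
        using modulus_interval_large by linarith
      then show ?thesis
        using modulus_pos by (simp add: Suc_le_eq div_greater_zero_iff)
    qed
    ultimately show ?thesis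
      by (simp add: algebra_simps flip: of_nat_mult of_nat_add)
  qed
  then have "real (card A) * (real X - 2 * M) \<le> real (card A) * (real M * real (X div M - 1))"
    by (rule mult_left_mono) simp
  with pattern_ge show ?thesis
    by linarith
qed

lemma card_pattern_large: "100 * real X \<le> real (card pattern) * M"
proof -
  have "100 * real X \<le> real (card A) * (real X - 2 * M)"
  proof -
    have "100 * real X \<le> 200 * (real X - 2 * M)"
      using modulus_interval_large by simp
    also have "\<dots> \<le> real (card A) * (real X - 2 * M)"
      using card_residues_ge modulus_interval_large by (intro mult_right_mono) auto
    finally show ?thesis .
  qed
  with card_pattern_ge show ?thesis
    by linarith
qed

lemma card_pattern_pos: "0 < card pattern"
  using card_pattern_large modulus_interval_large by (cases "card pattern") auto

lemma weight_nonneg: "0 \<le> weight x"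
  using density_pos by (simp add: weight_def)

lemma weight_le_one: "weight x \<le> 1"
proof -
  have "\<alpha> * X * M \<le> real X"
    using density_modulus_le by (metis mult.assoc mult.commute mult_left_le of_nat_0_le_iff)
  also have "\<dots> \<le> real (card pattern) * M"
    using card_pattern_large by simp
  finally have "\<alpha> * X \<le> card pattern"
    using modulus_pos by simp
  then show ?thesis
    using card_pattern_pos by (simp add: weight_def)
qed

lemma sum_weight: "(\<Sum>x\<in>{1..X}. weight x) = \<alpha> * X"
proof -
  have "(\<Sum>x\<in>{1..X}. weight x) = (\<Sum>x\<in>pattern. \<alpha> * X / card pattern)"
    unfolding weight_def pattern_def by (rule sum.inter_filter[symmetric]) simp
  then show ?thesis
    using card_pattern_pos by simp
qed

lemma sum_square_diff_weight_le:
  "(\<Sum>x\<in>{1..X}. \<Sum>y\<in>{1..X}. if square_diff x y then weight x * weight y else 0)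
     \<le> \<alpha> ^ 2 * real X powr (3/2) / 100"
proof -
  define t where "t = \<alpha> * X / card pattern"
  define T where "T = {(x, y) \<in> {1..X} \<times> {1..X}. square_diff x y \<and> x mod M \<in> A \<and> y mod M \<in> A}"
  have "(\<Sum>x\<in>{1..X}. \<Sum>y\<in>{1..X}. if square_diff x y then weight x * weight y else 0)
      = (\<Sum>(x, y)\<in>{1..X} \<times> {1..X}. if square_diff x y \<and> x mod M \<in> A \<and> y mod M \<in> A then t ^ 2 else 0)"
    unfolding sum.cartesian_product by (intro sum.cong) (auto simp: weight_def t_def power2_eq_square)
  also have "\<dots> = (\<Sum>p\<in>T. t ^ 2)"
    unfolding T_def by (rule sum.mono_neutral_cong_right) (auto split: if_splits)
  also have "\<dots> = t ^ 2 * card T"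
    by simp
  also have "\<dots> \<le> t ^ 2 * (card pattern * (sqrt X / M))"
  proof -
    have "card T \<le> card pattern * nat \<lfloor>sqrt (real X) / real M\<rfloor>"
      unfolding T_def pattern_def
      by (rule card_square_diff_pairs_le[OF modulus_pos residues_square_avoiding])
    then have "real (card T) \<le> card pattern * real (nat \<lfloor>sqrt (real X) / real M\<rfloor>)"
      by (metis of_nat_le_iff of_nat_mult)
    also have "\<dots> \<le> card pattern * (sqrt X / M)"
      by (intro mult_left_mono of_nat_floor) simp_all
    finally have "real (card T) \<le> card pattern * (sqrt X / M)" .
    then show ?thesis
      by (rule mult_left_mono) simp
  qed
  also have "\<dots> = \<alpha> ^ 2 * X * (X * sqrt X) / (card pattern * M)"
    using card_pattern_pos modulus_pos by (simp add: t_def field_simps power2_eq_square)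
  also have "\<dots> \<le> \<alpha> ^ 2 * X * (X * sqrt X) / (100 * X)"
    using card_pattern_large modulus_interval_large
    by (intro divide_left_mono) (auto intro!: mult_pos_pos)
  also have "\<dots> = \<alpha> ^ 2 * real X powr (3/2) / 100"
  proof -
    have "real X powr (3/2) = real X powr 1 * real X powr (1/2)"
      using powr_add[of "real X" 1 "1/2"] by simp
    also have "\<dots> = real X * sqrt X"
      using modulus_interval_large by (simp add: powr_half_sqrt)
    finally show ?thesis
      using modulus_interval_large by simp
  qed
  finally show ?thesis .
qed

lemma card_progression_pattern_le:
  assumes "coprime d M"
  shows "real (card {j\<in>{..<L}. (a + d * j) mod M \<in> A}) * M \<le> card A * (real L + M)"
proof -
  have "card {j\<in>{..<L}. (a + d * j) mod M \<in> A} \<le> card A * (L div M + 1)"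
    using card_progression_residues_le[OF modulus_pos assms residues_less] .
  then have "real (card {j\<in>{..<L}. (a + d * j) mod M \<in> A}) \<le> card A * (real (L div M) + 1)"
    by (metis of_nat_1 of_nat_add of_nat_le_iff of_nat_mult)
  then have "real (card {j\<in>{..<L}. (a + d * j) mod M \<in> A}) * M \<le> card A * (real (L div M) + 1) * M"
    by (rule mult_right_mono) simp
  also have "\<dots> = card A * (real (L div M) * M + M)"
    by (simp add: algebra_simps)
  also have "\<dots> \<le> card A * (real L + M)"
    by (intro mult_left_mono add_right_mono) (simp_all flip: of_nat_mult)
  finally show ?thesis .
qed

lemma prog_avg_weight_lt:
  assumes "coprime d M" "5 * M < L" "L \<le> X"
  shows "prog_avg weight a d L < 2 * \<alpha>"
proof -
  define c where "c = card {j\<in>{..<L}. (a + d * j) mod M \<in> A}"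
  have count: "real c * M \<le> card A * (real L + M)"
    unfolding c_def by (rule card_progression_pattern_le[OF assms(1)])
  have "real X * (L + M) < 2 * (real X - 2 * M) * L"
  proof -
    have "real L * M \<le> real X * M"
      using assms(3) by (intro mult_right_mono) auto
    then have "real X * M + 4 * (real M * L) \<le> 5 * (real M * X)"
      by (simp add: algebra_simps)
    also have "\<dots> < real L * X"
    proof -
      have "5 * real M < real L"
        using assms(2) by (metis of_nat_less_iff of_nat_mult of_nat_numeral)
      then show ?thesis
        using mult_strict_right_mono[of "5 * real M" "real L" "real X"] modulus_interval_large
        by (simp add: mult.assoc)
    qed
    finally show ?thesis
      by (simp add: algebra_simps)
  qed
  then have "real (card A) * (real X * (L + M)) < real (card A) * (2 * (real X - 2 * M) * L)"
    using card_residues_ge by (intro mult_strict_left_mono) auto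
  then have "real X * (card A * (real L + M)) < 2 * real L * (card A * (real X - 2 * real M))"
    by (simp add: algebra_simps)
  also have "\<dots> \<le> 2 * real L * (real (card pattern) * M)"
    using card_pattern_ge by (intro mult_left_mono) auto
  finally have "real X * (real c * M) < 2 * real L * (real (card pattern) * M)"
    using mult_left_mono[OF count, of "real X"] by simp
  then have "real X * c < 2 * real L * card pattern"
    using modulus_pos by (simp add: mult.assoc)
  then have "\<alpha> * X * c < \<alpha> * (2 * real L * card pattern)"
    using density_pos by (simp add: mult.assoc)
  moreover have "0 < real (card pattern) * L"
    using card_pattern_pos assms(2) by simp
  ultimately have "\<alpha> * X * c / (card pattern * L) < 2 * \<alpha>"
    by (simp add: field_simps)
  moreover have "prog_avg weight a d L = \<alpha> * X * c / (card pattern * L)"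
    unfolding prog_avg_def weight_def c_def
    by (subst sum.inter_filter[symmetric]) simp_all
  ultimately show ?thesis
    by simp
qed

lemma subprog_weight_avg_short:
  assumes "is_subprog X a d L" "2 * \<alpha> \<le> prog_avg weight a d L"
  shows "real L < real X / G"
proof (rule ccontr)
  assume "\<not> real L < real X / G"
  then have long: "real X \<le> L * G"
    using scale_ge_one by (simp add: field_simps)
  show False
  proof (cases "real d < 2 * G")
    case True
    have "1 \<le> d"
      using assms(1) by (simp add: is_subprog_def)
    with True have "coprime d M"
      by (rule coprime_short_steps[rotated])
    moreover have "5 * M < L"
    proof -
      have "5 * M * G < L * G"
        using interval_large long by linarith
      then show ?thesis
        using scale_ge_one by (simp flip: of_nat_less_iff)
    qed
    ultimately have "prog_avg weight a d L < 2 * \<alpha>"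
      using prog_avg_weight_lt is_subprog_bounds(1)[OF assms(1)] by blast
    with assms(2) show False
      by simp
  next
    case False
    have "1 \<le> L"
      using assms(1) by (simp add: is_subprog_def)
    then have "real d * (real L - 1) = real (d * (L - 1))"
      by simp
    also have "\<dots> \<le> real X"
      using is_subprog_bounds(2)[OF assms(1)] by (metis less_imp_le of_nat_le_iff)
    finally have "real d * (real L - 1) \<le> real X" .
    moreover have "2 * G * (real L - 1) \<le> real d * (real L - 1)"
      using False assms(1) by (intro mult_right_mono) (auto simp: is_subprog_def)
    ultimately have "real X \<le> 2 * G"
      using long by (simp add: algebra_simps)
    moreover have "5 * G \<le> 5 * M * G"
      using modulus_pos scale_ge_one by simp
    ultimately show False
      using interval_large scale_ge_one by linarith
  qed
qed

end

section \<open>Choice of the parameters\<close>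

lemma inverse_le_exp_neg_ln_powr:
  fixes x a :: real
  assumes "exp 1 \<le> x" "a \<le> 1"
  shows "1 / x \<le> exp (- (ln x powr a))"
proof -
  have "0 < x"
    using assms(1) exp_gt_zero[of 1] by linarith
  then have "1 \<le> ln x"
    using assms(1) by (metis ln_exp ln_le_cancel_iff exp_gt_zero)
  then have "ln x powr a \<le> ln x"
    using powr_mono[OF assms(2), of "ln x"] by simp
  then have "exp (- ln x) \<le> exp (- (ln x powr a))"
    by simp
  with \<open>0 < x\<close> show ?thesis
    by (simp add: exp_minus inverse_eq_divide)
qed

lemma cube_root_ln_inverse:
  fixes \<alpha> :: real
  assumes "0 < \<alpha>" "\<alpha> \<le> exp (-1000)"
  shows "(ln (1 / \<alpha>) powr (1/3)) ^ 3 = ln (1 / \<alpha>)" "10 \<le> ln (1 / \<alpha>) powr (1/3)"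
proof -
  have "1000 \<le> ln (1 / \<alpha>)"
    using assms ln_le_cancel_iff[of \<alpha> "exp (-1000)"] by (simp add: ln_div)
  then show cube: "(ln (1 / \<alpha>) powr (1/3)) ^ 3 = ln (1 / \<alpha>)"
    by (simp add: powr_power)
  show "10 \<le> ln (1 / \<alpha>) powr (1/3)"
  proof (rule ccontr)
    assume "\<not> 10 \<le> ln (1 / \<alpha>) powr (1/3)"
    then have "(ln (1 / \<alpha>) powr (1/3)) ^ 3 < 10 ^ 3"
      by (intro power_strict_mono) auto
    with cube \<open>1000 \<le> ln (1 / \<alpha>)\<close> show False
      by simp
  qed
qed

lemma two_pow_le_exp: "(2::real) ^ n \<le> exp (real n)"
proof -
  have "(2::real) ^ n \<le> exp 1 ^ n"
    using exp_ge_add_one_self[of 1] by (intro power_mono) auto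
  then show ?thesis
    by (simp add: exp_of_nat_mult[symmetric])
qed

lemma modulus_scale_lt_exp_cube:
  fixes s :: real and M N :: nat
  assumes "10 \<le> s" "N = nat \<lceil>2 * exp s\<rceil>" "M \<le> (2 * N ^ 3) ^ 10"
  shows "5 * M * exp s < exp (s ^ 3)"
proof -
  have "1 \<le> exp s"
    using assms(1) by simp
  have "real N \<le> 3 * exp s"
    using assms(2) \<open>1 \<le> exp s\<close> by linarith
  have "real M \<le> real ((2 * N ^ 3) ^ 10)"
    using assms(3) by (simp only: of_nat_le_iff)
  also have "\<dots> = (2 * real N ^ 3) ^ 10"
    by simp
  also have "\<dots> \<le> (2 * (3 * exp s) ^ 3) ^ 10"
    using \<open>real N \<le> 3 * exp s\<close> by (intro power_mono mult_left_mono) auto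
  also have "\<dots> = 54 ^ 10 * exp (30 * s)"
    by (simp add: power_mult_distrib exp_of_nat_mult[symmetric] flip: power_mult)
  finally have "5 * M * exp s \<le> 5 * (54 ^ 10 * exp (30 * s)) * exp s"
    by (intro mult_right_mono mult_left_mono) auto
  also have "\<dots> = 5 * 54 ^ 10 * exp (31 * s)"
    using mult_exp_exp[of "30 * s" s] by simp
  also have "\<dots> \<le> exp 63 * exp (31 * s)"
    using two_pow_le_exp[of 63] by (intro mult_right_mono) auto
  also have "\<dots> < exp (s ^ 3)"
  proof -
    have "100 \<le> s * s"
      using assms(1) mult_mono[of 10 s 10 s] by simp
    then have "100 * s \<le> s ^ 3"
      using assms(1) mult_right_mono[of 100 "s * s" s] by (simp add: power3_eq_cube)
    then show ?thesis
      using assms(1) by (simp add: mult_exp_exp)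
  qed
  finally show ?thesis .
qed

lemma sparse_residue_weight_exists:
  fixes X :: nat and \<alpha> :: real
  assumes "0 < \<alpha>" "\<alpha> \<le> exp (-1000)" "1 / \<alpha> \<le> X"
  obtains M A where "sparse_residue_weight M X A \<alpha> (exp (ln (1 / \<alpha>) powr (1/3)))"
proof -
  define s where "s = ln (1 / \<alpha>) powr (1/3)"
  define N where "N = nat \<lceil>2 * exp s\<rceil>"
  have "s ^ 3 = ln (1 / \<alpha>)" "10 \<le> s"
    unfolding s_def using cube_root_ln_inverse[OF assms(1,2)] by auto
  then have "12 \<le> 2 * exp s"
    using exp_ge_add_one_self[of s] by linarith
  then have "12 \<le> N"
    by (simp add: N_def le_nat_iff)
  then obtain M A where M: "0 < M" "M \<le> (2 * N ^ 3) ^ 10" "\<And>d. 1 \<le> d \<Longrightarrow> d \<le> N \<Longrightarrow> coprime d M"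
    and A: "A \<subseteq> {..<M}" "card A = 252" "square_avoiding M A"
    by (rule exists_square_avoiding_modulus) blast
  have "5 * M * exp s < 1 / \<alpha>"
    using modulus_scale_lt_exp_cube[OF \<open>10 \<le> s\<close> N_def M(2)] \<open>s ^ 3 = ln (1 / \<alpha>)\<close> assms(1) by simp
  have "sparse_residue_weight M X A \<alpha> (exp s)"
  proof
    show "coprime d M" if "1 \<le> d" "real d < 2 * exp s" for d
    proof (rule M(3)[OF that(1)])
      have "\<lceil>real d\<rceil> \<le> \<lceil>2 * exp s\<rceil>"
        using that(2) by (intro ceiling_mono) simp
      then show "d \<le> N"
        by (simp add: N_def le_nat_iff)
    qed
    have "real M * 1 \<le> real M * (5 * exp s)"
      using \<open>12 \<le> 2 * exp s\<close> by (intro mult_left_mono) auto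
    then have "real M \<le> 5 * M * exp s"
      by (simp add: algebra_simps)
    with \<open>5 * M * exp s < 1 / \<alpha>\<close> have "real M < 1 / \<alpha>"
      by linarith
    then show "\<alpha> * M \<le> 1"
      using assms(1) by (simp add: field_simps)
    show "5 * M * exp s < X"
      using \<open>5 * M * exp s < 1 / \<alpha>\<close> assms(3) by linarith
  qed (use M(1) A assms(1) \<open>10 \<le> s\<close> in auto)
  then show ?thesis
    using that by (simp add: s_def)
qed

lemma exists_sparse_weight:
  fixes X :: nat and \<alpha> :: real
  assumes "0 < \<alpha>" "\<alpha> \<le> exp (-1000)" "1 / \<alpha> \<le> X"
  shows "\<exists>f :: nat \<Rightarrow> real.
           (\<forall>x \<in> {1..X}. 0 \<le> f x \<and> f x \<le> 1) \<and>
           (\<Sum>x\<in>{1..X}. f x) / real X = \<alpha> \<and>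
           (\<Sum>x\<in>{1..X}. \<Sum>y\<in>{1..X}. if square_diff x y then f x * f y else 0)
              \<le> \<alpha>^2 * real X powr (3/2) / 100 \<and>
           (\<forall>a d L. is_subprog X a d L \<and> prog_avg f a d L \<ge> 2 * \<alpha> \<longrightarrow>
              real L < real X * exp (- ((ln (1 / \<alpha>)) powr (1/3))))"
proof -
  obtain M A where "sparse_residue_weight M X A \<alpha> (exp (ln (1 / \<alpha>) powr (1/3)))"
    using sparse_residue_weight_exists[OF assms] .
  then interpret sparse_residue_weight M X A \<alpha> "exp (ln (1 / \<alpha>) powr (1/3))" .
  have "real X * exp (- (ln (1 / \<alpha>) powr (1/3))) = real X / exp (ln (1 / \<alpha>) powr (1/3))"
    by (simp add: exp_minus field_simps)
  then show ?thesis
    using weight_nonneg weight_le_one sum_weight sum_square_diff_weight_le subprog_weight_avg_short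
      modulus_interval_large
    by (intro exI[of _ weight]) auto
qed

theorem proposition7p1:
  fixes \<eta> :: real
  assumes "\<eta> > 0"
  shows "\<exists>\<alpha>0 > 0. \<exists>X0::nat. \<forall>X::nat \<ge> X0. \<forall>\<alpha>::real.
           exp (- ((ln (real X)) powr (3/4 - \<eta>))) \<le> \<alpha> \<and> \<alpha> \<le> \<alpha>0 \<longrightarrow>
           (\<exists>f :: nat \<Rightarrow> real.
              (\<forall>x \<in> {1..X}. 0 \<le> f x \<and> f x \<le> 1) \<and>
              (\<Sum>x\<in>{1..X}. f x) / real X = \<alpha> \<and>
              (\<Sum>x\<in>{1..X}. \<Sum>y\<in>{1..X}. if square_diff x y then f x * f y else 0)
                 \<le> \<alpha>^2 * real X powr (3/2) / 100 \<and>
              (\<forall>a d L. is_subprog X a d L \<and> prog_avg f a d L \<ge> 2 * \<alpha> \<longrightarrow>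
                 real L < real X * exp (- ((ln (1 / \<alpha>)) powr (1/3)))))"
proof (intro exI[of _ "exp (-1000)"] conjI exI[of _ 3] allI impI, goal_cases)
  case 1
  show ?case
    by simp
next
  case (2 X \<alpha>)
  then have "1 / real X \<le> \<alpha>" "\<alpha> \<le> exp (-1000)"
    using inverse_le_exp_neg_ln_powr[of "real X" "3/4 - \<eta>"] exp_le assms by force+
  moreover have "0 < real X"
    using \<open>3 \<le> X\<close> by simp
  ultimately have "0 < \<alpha>"
    by (meson divide_pos_pos less_le_trans zero_less_one)
  with \<open>1 / real X \<le> \<alpha>\<close> \<open>0 < real X\<close> have "1 / \<alpha> \<le> X"
    by (simp add: field_simps)
  with \<open>0 < \<alpha>\<close> \<open>\<alpha> \<le> exp (-1000)\<close> show ?case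
    by (rule exists_sparse_weight)
qed

end
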